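(* Let $I\subset[0,+\infty)$ be an open interval, $\beta\in\{-1,1\}$, $t_0\in I$, $T>0$ with $t_0+\beta T\in I$, $\kappa,\mu\in\,]-1,+\infty[$, and let the noise $\varpi$ be a Poisson process with intensity $\nu>0$. Then: (i) if $n\ge 2$, for every $N\ge n$ and $\xi\in[0,1]$, $E\big[e^{\mu,\kappa}_{\varpi,\beta T,N,\xi}(t_0)\big]=0$; (ii) if $n=1$, $E\big[e^{\mu,\kappa}_{\varpi,\beta T}(t_0)\big]=\nu$ and, for every $\xi\in[0,1]$, $E\big[e^{\mu,\kappa}_{\varpi,\beta T,2,\xi}(t_0)\big]=\nu$.
   Context: A Poisson process $\{N(t),t\ge0\}$ with intensity $\nu$ has $E[N(t)]=\nu t$ and $\mathrm{Cov}[N(t),N(s)]=\nu\min(t,s)$. For $a,b>-1$ let $w^{a,b}(t)=t^{b}(1-t)^{a}$, $P_k^{a,b}(t)=\sum_{s=0}^{k}\binom{k+a}{s}\binom{k+b}{k-s}(t-1)^{k-s}t^{s}$, $\|P_k^{a,b}\|^2=\int_0^1 w^{a,b}(P_k^{a,b})^2$, and $B$ the Beta function. For $n\in\mathbb{N}$, $N\ge n$, $q=N-n$, $\xi\in[0,1]$, the Jacobi estimator kernel is $$p_{\beta T,n,N,\xi}^{\mu,\kappa}(\tau)=\frac{(-1)^n}{(\beta T)^n}\sum_{i=0}^{q}\frac{P_i^{\mu+n,\kappa+n}(\xi)}{\|P_i^{\mu+n,\kappa+n}\|^2}\frac{d^n}{d\tau^n}\Big[w^{\mu+n,\kappa+n}(\tau)P_i^{\mu+n,\kappa+n}(\tau)\Big],$$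 and its noise error contribution is $e^{\mu,\kappa}_{\varpi,\beta T,N,\xi}(t_0)=\int_0^1 p_{\beta T,n,N,\xi}^{\mu,\kappa}(\tau)\varpi(t_0+\beta T\tau)d\tau$ (mean-square integral). For $n=1$: the minimal estimator has kernel $p^{\mu,\kappa}_{\beta T}(\tau)=\frac{1}{\beta T}\frac{\Gamma(\mu+\kappa+4)}{\Gamma(\kappa+2)\Gamma(\mu+2)}\big((\mu+\kappa+2)\tau-(\kappa+1)\big)(1-\tau)^{\mu}\tau^{\kappa}$ and noise error contribution $e^{\mu,\kappa}_{\varpi,\beta T}(t_0)=\int_0^1p^{\mu,\kappa}_{\beta T}(\tau)\varpi(t_0+\beta T\tau)d\tau$; the affine estimator with $N=2$ has kernel $p^{\mu,\kappa}_{\beta T,2,\xi}=\lambda_1 p^{\mu+1,\kappa}_{\beta T}+\lambda_0p^{\mu,\kappa+1}_{\beta T}$ with $\lambda_1=(\kappa+3)-(\mu+\kappa+5)\xi$, $\lambda_0=1-\lambda_1$, and noise error contribution $e^{\mu,\kappa}_{\varpi,\beta T,2,\xi}(t_0)=\int_0^1p^{\mu,\kappa}_{\beta T,2,\xi}(\tau)\varpi(t_0+\beta T\tau)d\tau$. *)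

theory Defs
  imports "HOL-Probability.Probability"
begin

definition poisson_process :: "'a measure \<Rightarrow> real \<Rightarrow> (real \<Rightarrow> 'a \<Rightarrow> real) \<Rightarrow> bool" where
  "poisson_process M \<nu> N \<longleftrightarrow>
     prob_space M \<and> \<nu> > 0 \<and>
     (\<forall>t\<ge>0. N t \<in> borel_measurable M) \<and>
     (\<forall>\<omega>\<in>space M. N 0 \<omega> = 0) \<and>
     (\<forall>\<omega>\<in>space M. mono_on {0..} (\<lambda>t. N t \<omega>) \<and>
        (\<forall>t\<ge>0. continuous (at_right t) (\<lambda>t. N t \<omega>))) \<and>
     (\<forall>s t (k::nat). 0 \<le> s \<and> s \<le> t \<longrightarrow>
        measure M {\<omega>\<in>space M. N t \<omega> - N s \<omega> = real k}
          = (\<nu> * (t - s)) ^ k / fact k * exp (- (\<nu> * (t - s)))) \<and>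
     (\<forall>(ts::nat \<Rightarrow> real) n. 0 \<le> ts 0 \<and> mono ts \<longrightarrow>
        prob_space.indep_vars M (\<lambda>_. borel) (\<lambda>i \<omega>. N (ts (Suc i)) \<omega> - N (ts i) \<omega>) {..<n})"

definition jw :: "real \<Rightarrow> real \<Rightarrow> real \<Rightarrow> real" where
  "jw a b t = t powr b * (1 - t) powr a"

definition jacP :: "nat \<Rightarrow> real \<Rightarrow> real \<Rightarrow> real \<Rightarrow> real" where
  "jacP k a b t = (\<Sum>s=0..k. ((real k + a) gchoose s) * ((real k + b) gchoose (k - s))
                       * (t - 1) ^ (k - s) * t ^ s)"

definition jac_norm2 :: "nat \<Rightarrow> real \<Rightarrow> real \<Rightarrow> real" where
  "jac_norm2 k a b = (LINT t:{0..1}|lborel. jw a b t * (jacP k a b t)^2)"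

definition jacobi_kernel :: "real \<Rightarrow> real \<Rightarrow> real \<Rightarrow> nat \<Rightarrow> nat \<Rightarrow> real \<Rightarrow> real \<Rightarrow> real" where
  "jacobi_kernel \<mu> \<kappa> h n N \<xi> \<tau> =
     (-1) ^ n / h ^ n *
     (\<Sum>i=0..N - n. jacP i (\<mu> + real n) (\<kappa> + real n) \<xi> / jac_norm2 i (\<mu> + real n) (\<kappa> + real n)
        * (deriv ^^ n) (\<lambda>s. jw (\<mu> + real n) (\<kappa> + real n) s * jacP i (\<mu> + real n) (\<kappa> + real n) s) \<tau>)"

definition min_kernel :: "real \<Rightarrow> real \<Rightarrow> real \<Rightarrow> real \<Rightarrow> real" where
  "min_kernel \<mu> \<kappa> h \<tau> =
     1 / h * (Gamma (\<mu> + \<kappa> + 4) / (Gamma (\<kappa> + 2) * Gamma (\<mu> + 2)))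
       * ((\<mu> + \<kappa> + 2) * \<tau> - (\<kappa> + 1)) * (1 - \<tau>) powr \<mu> * \<tau> powr \<kappa>"

definition aff_kernel :: "real \<Rightarrow> real \<Rightarrow> real \<Rightarrow> real \<Rightarrow> real \<Rightarrow> real" where
  "aff_kernel \<mu> \<kappa> h \<xi> \<tau> =
     (let l1 = (\<kappa> + 3) - (\<mu> + \<kappa> + 5) * \<xi>; l0 = 1 - l1
      in l1 * min_kernel (\<mu> + 1) \<kappa> h \<tau> + l0 * min_kernel \<mu> (\<kappa> + 1) h \<tau>)"

text \<open>Noise error contribution: integral over [0,1] of kernel(tau) * noise(t0 + h tau),
  taken pathwise (agrees a.s. with the mean-square integral for the processes considered).\<close>
definition noise_err :: "(real \<Rightarrow> real) \<Rightarrow> (real \<Rightarrow> 'a \<Rightarrow> real) \<Rightarrow> real \<Rightarrow> real \<Rightarrow> 'a \<Rightarrow> real" where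
  "noise_err p X h t0 \<omega> = (LINT \<tau>:{0..1}|lborel. p \<tau> * X (t0 + h * \<tau>) \<omega>)"

end

theory Submission
  imports Defs "HOL-Real_Asymp.Real_Asymp" "HOL-Computational_Algebra.Polynomial"
begin

text \<open>Since \<open>E[W t] = \<nu> t\<close>, Fubini turns the expected noise error of a kernel \<open>p\<close> into
  \<open>\<nu> (t0 \<integral>p + h \<integral>\<tau> p)\<close>, so only the first two moments of the kernel on \<open>[0,1]\<close> matter.
  Every kernel involved is a linear combination of functions
  \<open>t powr b * (1 - t) powr a * poly P t\<close> that are derivatives of such products vanishing at both
  endpoints, so the zeroth moment is \<open>0\<close>. An integration by parts moves the factor \<open>\<tau>\<close> onto
  the antiderivative: for \<open>n \<ge> 2\<close> derivatives it is again a boundary-free derivative, so the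
  first moment vanishes too, while for the single derivative of the minimal kernel it leaves a
  Beta integral whose normalisation makes the first moment \<open>1 / h\<close>.\<close>

section \<open>Expected noise error for a Poisson process\<close>

lemma poisson_processD:
  assumes "poisson_process M \<nu> W"
  shows "prob_space M"
    and "t \<ge> 0 \<Longrightarrow> W t \<in> borel_measurable M"
    and "t \<ge> 0 \<Longrightarrow> \<omega> \<in> space M \<Longrightarrow> 0 \<le> W t \<omega>"
    and "t \<ge> 0 \<Longrightarrow> \<omega> \<in> space M \<Longrightarrow> continuous (at_right t) (\<lambda>t. W t \<omega>)"
    and "t \<ge> 0 \<Longrightarrow> measure M {\<omega>\<in>space M. W t \<omega> = real k} = (\<nu> * t) ^ k / fact k * exp (- (\<nu> * t))"
proof -
  note D = assms[unfolded poisson_process_def]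
  show "prob_space M" using D by auto
  show "t \<ge> 0 \<Longrightarrow> W t \<in> borel_measurable M" using D by auto
  show "t \<ge> 0 \<Longrightarrow> \<omega> \<in> space M \<Longrightarrow> continuous (at_right t) (\<lambda>t. W t \<omega>)" using D by auto
  show "0 \<le> W t \<omega>" if "t \<ge> 0" "\<omega> \<in> space M"
  proof -
    have "mono_on {0..} (\<lambda>t. W t \<omega>)" "W 0 \<omega> = 0" using D that by auto
    then show ?thesis using that by (metis atLeast_iff mono_onD order_refl)
  qed
  show "measure M {\<omega>\<in>space M. W t \<omega> = real k} = (\<nu> * t) ^ k / fact k * exp (- (\<nu> * t))"
    if "t \<ge> 0"
  proof -
    have "measure M {\<omega>\<in>space M. W t \<omega> - W 0 \<omega> = real k} = (\<nu> * (t - 0)) ^ k / fact k * exp (- (\<nu> * (t - 0)))"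
      using D that by blast
    moreover have "{\<omega>\<in>space M. W t \<omega> - W 0 \<omega> = real k} = {\<omega>\<in>space M. W t \<omega> = real k}"
      using D by auto
    ultimately show ?thesis by simp
  qed
qed

lemma poisson_sums:
  fixes x :: real
  shows "(\<lambda>k. x ^ k / fact k * exp (- x)) sums 1"
    and "(\<lambda>k. real k * (x ^ k / fact k * exp (- x))) sums x"
proof -
  have e: "(\<lambda>n. x ^ n / fact n) sums exp x"
    using exp_converges[of x] by (simp add: divide_inverse mult.commute)
  from sums_mult2[OF e, of "exp (-x)"] show "(\<lambda>k. x ^ k / fact k * exp (- x)) sums 1"
    by (simp add: exp_minus field_simps)
  have "real (Suc n) * (x ^ Suc n / fact (Suc n) * exp (- x)) = x * exp (-x) * (x ^ n / fact n)" for n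
    by (simp add: fact_Suc field_simps del: of_nat_Suc)
  with sums_mult[OF e, of "x * exp (-x)"]
  have "(\<lambda>n. real (Suc n) * (x ^ Suc n / fact (Suc n) * exp (- x))) sums x"
    by (simp add: exp_minus mult_ac)
  from sums_Suc[OF this] show "(\<lambda>k. real k * (x ^ k / fact k * exp (- x))) sums x" by simp
qed

lemma has_bochner_integral_nat_valued:
  assumes "prob_space M" and [measurable]: "X \<in> borel_measurable M"
    and distr: "(\<lambda>k. measure M {\<omega>\<in>space M. X \<omega> = real k}) sums 1"
    and mean: "(\<lambda>k. real k * measure M {\<omega>\<in>space M. X \<omega> = real k}) sums m"
  shows "has_bochner_integral M X m"
proof -
  interpret prob_space M by fact
  define A where "A k = {\<omega>\<in>space M. X \<omega> = real k}" for k :: nat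
  have A_sets: "A k \<in> sets M" for k unfolding A_def by measurable
  have A_disj: "disjoint_family A" unfolding disjoint_family_on_def A_def by auto
  have "(\<lambda>k. measure M (A k)) sums measure M (\<Union>k. A k)"
    by (rule measure_UNION) (use A_sets A_disj in auto)
  with distr have "measure M (\<Union>k. A k) = 1"
    by (simp add: A_def sums_unique2)
  then have AE_nat: "AE \<omega> in M. \<omega> \<in> (\<Union>k. A k)"
    using AE_in_set_eq_1 A_sets by blast
  then have AE_nonneg: "AE \<omega> in M. 0 \<le> X \<omega>"
    by eventually_elim (auto simp: A_def)
  have "AE \<omega> in M. ennreal (X \<omega>) = (\<Sum>k. ennreal (real k) * indicator (A k) \<omega>)"
    using AE_nat
  proof eventually_elim
    case (elim \<omega>)
    then obtain j where j: "\<omega> \<in> A j" by auto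
    then have "X \<omega> = real j" by (simp add: A_def)
    then show ?case using suminf_cmult_indicator[OF A_disj j, of "\<lambda>k. ennreal (real k)"] by simp
  qed
  then have "(\<integral>\<^sup>+\<omega>. ennreal (X \<omega>) \<partial>M) = (\<integral>\<^sup>+\<omega>. (\<Sum>k. ennreal (real k) * indicator (A k) \<omega>) \<partial>M)"
    by (rule nn_integral_cong_AE)
  also have "\<dots> = (\<Sum>k. \<integral>\<^sup>+\<omega>. ennreal (real k) * indicator (A k) \<omega> \<partial>M)"
    by (rule nn_integral_suminf) (use A_sets in auto)
  also have "\<dots> = (\<Sum>k. ennreal (real k * measure M (A k)))"
    using A_sets by (simp add: nn_integral_cmult_indicator emeasure_eq_measure ennreal_mult)
  also have "\<dots> = ennreal m"
    by (rule suminf_ennreal_eq) (use mean in \<open>auto simp: A_def\<close>)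
  finally have nn: "(\<integral>\<^sup>+\<omega>. ennreal (X \<omega>) \<partial>M) = ennreal m" .
  have "0 \<le> m"
    by (rule sums_le[OF _ sums_zero mean]) simp
  then show ?thesis
    by (intro has_bochner_integral_nn_integral AE_nonneg nn) auto
qed

lemma poisson_process_has_bochner_integral:
  assumes P: "poisson_process M \<nu> W" and t: "t \<ge> 0"
  shows "has_bochner_integral M (W t) (\<nu> * t)"
  by (rule has_bochner_integral_nat_valued)
     (use poisson_processD[OF P] t poisson_sums[of "\<nu> * t"] in auto)

lemma filterlim_dyadic_upper_at_right:
  fixes s :: real
  shows "filterlim (\<lambda>m::nat. (real_of_int \<lfloor>s * 2 ^ m\<rfloor> + 1) / 2 ^ m) (at_right s) sequentially"
proof -
  let ?r = "\<lambda>m::nat. (real_of_int \<lfloor>s * 2 ^ m\<rfloor> + 1) / 2 ^ m"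
  have lower: "s < ?r m" for m
  proof -
    have "s * 2 ^ m < real_of_int \<lfloor>s * 2 ^ m\<rfloor> + 1" by linarith
    then show ?thesis by (simp add: field_simps)
  qed
  have upper: "?r m \<le> s + 1 / 2 ^ m" for m
  proof -
    have "real_of_int \<lfloor>s * 2 ^ m\<rfloor> + 1 \<le> s * 2 ^ m + 1" by linarith
    then show ?thesis by (simp add: field_simps)
  qed
  have bound_lim: "(\<lambda>m::nat. s + 1 / 2 ^ m) \<longlonglongrightarrow> s" by real_asymp
  have "?r \<longlonglongrightarrow> s"
    by (rule tendsto_sandwich[OF _ _ tendsto_const bound_lim])
       (use lower upper in \<open>auto intro!: always_eventually less_imp_le\<close>)
  moreover have "?r m \<noteq> s" for m
    using lower[of m] by simp
  ultimately show ?thesis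
    unfolding filterlim_at using lower by (auto intro!: always_eventually)
qed

text \<open>The paths are sampled at the dyadic points just to the right of the time, which gives
  measurable approximations converging by right continuity.\<close>
lemma measurable_right_continuous_process:
  fixes X :: "real \<Rightarrow> 'a \<Rightarrow> real"
  assumes meas: "\<And>t. t \<ge> 0 \<Longrightarrow> X t \<in> borel_measurable M"
    and cont: "\<And>t \<omega>. t \<ge> 0 \<Longrightarrow> \<omega> \<in> space M \<Longrightarrow> continuous (at_right t) (\<lambda>t. X t \<omega>)"
  shows "(\<lambda>x. X (max 0 (fst x)) (snd x)) \<in> borel_measurable (borel \<Otimes>\<^sub>M M)"
proof (rule borel_measurable_LIMSEQ_real)
  let ?r = "\<lambda>m::nat. \<lambda>s::real. (real_of_int \<lfloor>s * 2 ^ m\<rfloor> + 1) / 2 ^ m"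
  show "(\<lambda>m. X (?r m (max 0 (fst x))) (snd x)) \<longlonglongrightarrow> X (max 0 (fst x)) (snd x)"
    if "x \<in> space (borel \<Otimes>\<^sub>M M)" for x
  proof -
    have "snd x \<in> space M" using that by (auto simp: space_pair_measure)
    then have "((\<lambda>t. X t (snd x)) \<longlongrightarrow> X (max 0 (fst x)) (snd x)) (at_right (max 0 (fst x)))"
      using cont[of "max 0 (fst x)"] by (simp add: continuous_within)
    from filterlim_compose[OF this filterlim_dyadic_upper_at_right] show ?thesis by simp
  qed
  show "(\<lambda>x. X (?r m (max 0 (fst x))) (snd x)) \<in> borel_measurable (borel \<Otimes>\<^sub>M M)" for m
  proof -
    have "(\<lambda>x. X (max 0 ((real_of_int k + 1) / 2 ^ m)) (snd x)) \<in> borel_measurable (borel \<Otimes>\<^sub>M M)" for k :: int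
      using meas[of "max 0 ((real_of_int k + 1) / 2 ^ m)"] by measurable
    moreover have "(\<lambda>x::real \<times> 'a. \<lfloor>max 0 (fst x) * (2::real) ^ m\<rfloor>) \<in> measurable (borel \<Otimes>\<^sub>M M) (count_space UNIV)"
      by measurable
    ultimately have "(\<lambda>x. X (max 0 ((real_of_int \<lfloor>max 0 (fst x) * (2::real) ^ m\<rfloor> + 1) / 2 ^ m)) (snd x))
        \<in> borel_measurable (borel \<Otimes>\<^sub>M M)"
      by (rule measurable_compose_countable)
    moreover have "max 0 ((real_of_int \<lfloor>max 0 s * 2 ^ m\<rfloor> + 1) / 2 ^ m) = ?r m (max 0 s)" for s :: real
      by (intro max_absorb2) simp
    ultimately show ?thesis by simp
  qed
qed

lemma integral_set_integral_nonneg_process: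
  fixes Y :: "real \<Rightarrow> 'a \<Rightarrow> real" and q m :: "real \<Rightarrow> real"
  assumes "prob_space M" and S: "S \<in> sets lborel"
    and Y_meas: "(\<lambda>x. Y (fst x) (snd x)) \<in> borel_measurable (lborel \<Otimes>\<^sub>M M)"
    and q_meas: "set_borel_measurable lborel S q"
    and nonneg: "\<And>\<tau> \<omega>. \<tau> \<in> S \<Longrightarrow> \<omega> \<in> space M \<Longrightarrow> 0 \<le> Y \<tau> \<omega>"
    and mean: "\<And>\<tau>. \<tau> \<in> S \<Longrightarrow> has_bochner_integral M (Y \<tau>) (m \<tau>)"
    and qm: "set_integrable lborel S (\<lambda>\<tau>. q \<tau> * m \<tau>)"
  shows "(\<integral>\<omega>. (LINT \<tau>:S|lborel. q \<tau> * Y \<tau> \<omega>) \<partial>M) = (LINT \<tau>:S|lborel. q \<tau> * m \<tau>)"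
proof -
  interpret prob_space M by fact
  interpret pair_sigma_finite lborel M
    by (simp add: pair_sigma_finite_def lborel.sigma_finite_measure_axioms
        prob_space_imp_sigma_finite prob_space_axioms)
  define F where "F x = (indicator S (fst x) * q (fst x)) * Y (fst x) (snd x)" for x
  have "(\<lambda>x::real \<times> 'a. indicator S (fst x) * q (fst x)) \<in> borel_measurable (lborel \<Otimes>\<^sub>M M)"
    using measurable_compose[OF measurable_fst q_meas[unfolded set_borel_measurable_def]] by simp
  then have F_meas: "F \<in> borel_measurable (lborel \<Otimes>\<^sub>M M)"
    unfolding F_def[abs_def] using Y_meas by measurable
  have inner_int: "has_bochner_integral M (\<lambda>\<omega>. F (\<tau>, \<omega>)) (indicator S \<tau> * (q \<tau> * m \<tau>))" for \<tau>
  proof (cases "\<tau> \<in> S")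
    case True
    then show ?thesis
      using has_bochner_integral_mult_right[OF mean[OF True], of "q \<tau>"] by (simp add: F_def)
  qed (simp add: F_def has_bochner_integral_zero)
  have inner_norm: "(\<integral>\<omega>. norm (F (\<tau>, \<omega>)) \<partial>M) = indicator S \<tau> * \<bar>q \<tau> * m \<tau>\<bar>" for \<tau>
  proof (cases "\<tau> \<in> S")
    case True
    have "0 \<le> (\<integral>\<omega>. Y \<tau> \<omega> \<partial>M)"
      by (rule Bochner_Integration.integral_nonneg) (rule nonneg[OF True])
    then have m_nonneg: "0 \<le> m \<tau>"
      using mean[OF True] by (simp add: has_bochner_integral_integral_eq)
    have "(\<integral>\<omega>. norm (F (\<tau>, \<omega>)) \<partial>M) = (\<integral>\<omega>. \<bar>q \<tau>\<bar> * Y \<tau> \<omega> \<partial>M)"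
      by (rule Bochner_Integration.integral_cong) (simp_all add: F_def True abs_mult nonneg)
    also have "\<dots> = \<bar>q \<tau>\<bar> * m \<tau>"
      using has_bochner_integral_integral_eq[OF mean[OF True]] by simp
    finally show ?thesis
      using m_nonneg True by (simp add: abs_mult)
  qed (simp add: F_def)
  have F_int: "integrable (lborel \<Otimes>\<^sub>M M) F"
  proof (rule Fubini_integrable[OF F_meas])
    show "integrable lborel (\<lambda>\<tau>. \<integral>\<omega>. norm (F (\<tau>, \<omega>)) \<partial>M)"
      unfolding inner_norm using set_integrable_abs[OF qm] by (simp add: set_integrable_def)
    show "AE \<tau> in lborel. integrable M (\<lambda>\<omega>. F (\<tau>, \<omega>))"
      using inner_int by (simp add: has_bochner_integral_iff)
  qed
  have "(\<integral>\<omega>. (LINT \<tau>:S|lborel. q \<tau> * Y \<tau> \<omega>) \<partial>M) = (\<integral>\<omega>. (\<integral>\<tau>. F (\<tau>, \<omega>) \<partial>lborel) \<partial>M)"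
    by (simp add: set_lebesgue_integral_def F_def mult.assoc)
  also have "\<dots> = (\<integral>\<tau>. (\<integral>\<omega>. F (\<tau>, \<omega>) \<partial>M) \<partial>lborel)"
    by (rule Fubini_integral) (simp add: split_beta' F_int)
  also have "\<dots> = (LINT \<tau>:S|lborel. q \<tau> * m \<tau>)"
    using has_bochner_integral_integral_eq[OF inner_int] by (simp add: set_lebesgue_integral_def)
  finally show ?thesis .
qed

lemma set_integrable_mult_unit_interval:
  fixes p :: "real \<Rightarrow> real"
  assumes p: "set_integrable lborel {0..1} p"
  shows "set_integrable lborel {0..1} (\<lambda>\<tau>. \<tau> * p \<tau>)"
  unfolding set_integrable_def
proof (rule Bochner_Integration.integrable_bound)
  show "integrable lborel (\<lambda>\<tau>. indicator {0..1} \<tau> *\<^sub>R p \<tau>)"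
    using p by (simp add: set_integrable_def)
  define q where "q \<tau> = indicator {0..1} \<tau> * p \<tau>" for \<tau>
  have [measurable]: "q \<in> borel_measurable lborel"
    using p by (simp add: q_def[abs_def] set_integrable_def borel_measurable_integrable)
  have "(\<lambda>\<tau>. \<tau> * q \<tau>) \<in> borel_measurable lborel"
    by measurable
  then show "(\<lambda>\<tau>. indicator {0..1} \<tau> *\<^sub>R (\<tau> * p \<tau>)) \<in> borel_measurable lborel"
    by (simp add: q_def mult_ac)
  show "AE \<tau> in lborel. norm (indicator {0..1} \<tau> *\<^sub>R (\<tau> * p \<tau>)) \<le> norm (indicator {0..1} \<tau> *\<^sub>R p \<tau>)"
    by (intro AE_I2) (auto simp: indicator_def abs_mult intro!: mult_left_le_one_le)
qed

lemma poisson_noise_err_expectation: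
  assumes P: "poisson_process M \<nu> W" and t0: "0 \<le> t0" "0 \<le> t0 + h"
    and p: "set_integrable lborel {0..1} p"
    and p_int: "(p has_integral a) {0..1}"
    and p_moment: "((\<lambda>\<tau>. \<tau> * p \<tau>) has_integral b) {0..1}"
  shows "(\<integral>\<omega>. noise_err p W h t0 \<omega> \<partial>M) = \<nu> * (t0 * a + h * b)"
proof -
  have time_nonneg: "0 \<le> t0 + h * \<tau>" if "\<tau> \<in> {0..1}" for \<tau>
  proof -
    have "0 \<le> (1 - \<tau>) * t0" "0 \<le> \<tau> * (t0 + h)"
      using that t0 by auto
    then show ?thesis by (simp add: algebra_simps)
  qed
  define Y where "Y \<tau> = W (max 0 (t0 + h * \<tau>))" for \<tau>
  have "(\<lambda>x::real \<times> 'a. (t0 + h * fst x, snd x)) \<in> measurable (lborel \<Otimes>\<^sub>M M) (borel \<Otimes>\<^sub>M M)"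
    by measurable
  from measurable_compose[OF this measurable_right_continuous_process]
  have Y_meas: "(\<lambda>x. Y (fst x) (snd x)) \<in> borel_measurable (lborel \<Otimes>\<^sub>M M)"
    using poisson_processD(2,4)[OF P] by (simp add: Y_def)
  have p_moment_int: "set_integrable lborel {0..1} (\<lambda>\<tau>. \<tau> * p \<tau>)"
    by (rule set_integrable_mult_unit_interval[OF p])
  have lin: "(\<lambda>\<tau>. p \<tau> * (\<nu> * (t0 + h * \<tau>))) = (\<lambda>\<tau>. \<nu> * t0 * p \<tau> + \<nu> * h * (\<tau> * p \<tau>))"
    by (simp add: fun_eq_iff algebra_simps)
  note split_int = set_integral_add[OF set_integrable_mult_right[OF p, of "\<nu> * t0"]
      set_integrable_mult_right[OF p_moment_int, of "\<nu> * h"]]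
  have mean_p: "set_integrable lborel {0..1} (\<lambda>\<tau>. p \<tau> * (\<nu> * (t0 + h * \<tau>)))"
    unfolding lin by (rule split_int(1))
  have "(LINT \<tau>:{0..1}|lborel. p \<tau> * (\<nu> * (t0 + h * \<tau>)))
          = \<nu> * t0 * (LINT \<tau>:{0..1}|lborel. p \<tau>) + \<nu> * h * (LINT \<tau>:{0..1}|lborel. \<tau> * p \<tau>)"
    unfolding lin split_int(2) by simp
  also have "\<dots> = \<nu> * (t0 * a + h * b)"
    using set_borel_integral_eq_integral(2)[OF p] set_borel_integral_eq_integral(2)[OF p_moment_int]
      integral_unique[OF p_int] integral_unique[OF p_moment] by (simp add: algebra_simps)
  finally have mean_eq: "(LINT \<tau>:{0..1}|lborel. p \<tau> * (\<nu> * (t0 + h * \<tau>))) = \<nu> * (t0 * a + h * b)" .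
  have "noise_err p W h t0 \<omega> = (LINT \<tau>:{0..1}|lborel. p \<tau> * Y \<tau> \<omega>)" for \<omega>
    unfolding noise_err_def Y_def
    by (rule set_lebesgue_integral_cong) (auto simp: max_absorb2 time_nonneg)
  then have "(\<integral>\<omega>. noise_err p W h t0 \<omega> \<partial>M) = (\<integral>\<omega>. (LINT \<tau>:{0..1}|lborel. p \<tau> * Y \<tau> \<omega>) \<partial>M)"
    by simp
  also have "\<dots> = (LINT \<tau>:{0..1}|lborel. p \<tau> * (\<nu> * (t0 + h * \<tau>)))"
  proof (rule integral_set_integral_nonneg_process[OF poisson_processD(1)[OF P] _ Y_meas _ _ _ mean_p])
    show "set_borel_measurable lborel {0..1} p"
      using p by (simp add: set_integrable_def set_borel_measurable_def borel_measurable_integrable)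
    show "0 \<le> Y \<tau> \<omega>" if "\<tau> \<in> {0..1}" "\<omega> \<in> space M" for \<tau> \<omega>
      using poisson_processD(3)[OF P _ that(2)] by (simp add: Y_def)
    show "has_bochner_integral M (Y \<tau>) (\<nu> * (t0 + h * \<tau>))" if "\<tau> \<in> {0..1}" for \<tau>
      using poisson_process_has_bochner_integral[OF P time_nonneg[OF that]] time_nonneg[OF that]
      by (simp add: Y_def max_absorb2)
  qed simp
  finally show ?thesis
    using mean_eq by simp
qed

section \<open>Moments of the estimator kernels\<close>

definition weighted_deriv_poly :: "real \<Rightarrow> real \<Rightarrow> real poly \<Rightarrow> real poly" where
  "weighted_deriv_poly b a Q = [:b, -b:] * Q - smult a [:0, 1:] * Q + [:0, 1, -1:] * pderiv Q"

lemma has_real_derivative_weighted_poly: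
  assumes "s \<in> {0<..<1}"
  shows "((\<lambda>t. t powr b * (1 - t) powr a * poly Q t) has_real_derivative
           s powr (b - 1) * (1 - s) powr (a - 1) * poly (weighted_deriv_poly b a Q) s) (at s)"
proof -
  from assms have s0: "s > 0" and s1: "1 - s > 0" by auto
  have "((\<lambda>t. t powr b * (1 - t) powr a * poly Q t) has_real_derivative
      (b * s powr (b - 1) * (1 - s) powr a + s powr b * (a * (1 - s) powr (a - 1) * (0 - 1))) * poly Q s
        + s powr b * (1 - s) powr a * poly (pderiv Q) s) (at s)"
    using s0 s1
    by (intro derivative_eq_intros DERIV_mult has_real_derivative_powr poly_DERIV
          DERIV_chain2[OF has_real_derivative_powr]) auto
  moreover have "s powr b = s powr (b - 1) * s" using s0 by (simp add: powr_diff)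
  moreover have "(1 - s) powr a = (1 - s) powr (a - 1) * (1 - s)" using s1 by (simp add: powr_diff)
  ultimately show ?thesis
    by (simp add: weighted_deriv_poly_def algebra_simps)
qed

lemma set_integrable_beta_weighted:
  fixes g :: "real \<Rightarrow> real"
  assumes "b > -1" and "a > -1" and g: "continuous_on {0..1} g"
  shows "set_integrable lborel {0..1} (\<lambda>t. t powr b * (1 - t) powr a * g t)"
proof -
  obtain B where B: "\<And>t. t \<in> {0..1} \<Longrightarrow> \<bar>g t\<bar> \<le> B"
    using compact_imp_bounded[OF compact_continuous_image[OF g compact_Icc]]
    by (metis bounded_iff image_eqI real_norm_def)
  have "set_integrable lborel {0..1} (\<lambda>t. t powr (b + 1 - 1) * (1 - t) powr (a + 1 - 1))"
    by (rule integrable_Beta) (use assms in auto)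
  then have "set_integrable lborel {0..1} (\<lambda>t. B * (t powr b * (1 - t) powr a))"
    by (intro set_integrable_mult_right) simp
  then show ?thesis
  proof (rule set_integrable_bound)
    have "(\<lambda>t. indicator {0..1} t *\<^sub>R g t) \<in> borel_measurable borel"
      by (rule borel_measurable_continuous_on_indicator[OF _ g]) simp
    then have "(\<lambda>t. t powr b * (1 - t) powr a * (indicator {0..1} t *\<^sub>R g t)) \<in> borel_measurable lborel"
      by measurable
    then show "set_borel_measurable lborel {0..1} (\<lambda>t. t powr b * (1 - t) powr a * g t)"
      by (simp add: set_borel_measurable_def mult_ac)
    have "\<bar>t powr b * (1 - t) powr a * g t\<bar> \<le> \<bar>B * (t powr b * (1 - t) powr a)\<bar>" if "t \<in> {0..1}" for t
    proof -
      have "\<bar>t powr b * (1 - t) powr a * g t\<bar> = t powr b * (1 - t) powr a * \<bar>g t\<bar>"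
        by (simp add: abs_mult)
      also have "\<dots> \<le> t powr b * (1 - t) powr a * B"
        by (intro mult_left_mono B that) simp
      also have "\<dots> \<le> \<bar>B * (t powr b * (1 - t) powr a)\<bar>"
        by (simp add: abs_mult mult_ac mult_right_mono)
      finally show ?thesis .
    qed
    then show "AE t in lborel. t \<in> {0..1} \<longrightarrow>
        norm (t powr b * (1 - t) powr a * g t) \<le> norm (B * (t powr b * (1 - t) powr a))"
      by simp
  qed
qed

text \<open>Integration by parts without boundary terms: the antiderivative
  \<open>t powr (b + 1) * (1 - t) powr (a + 1) * poly Q t\<close> vanishes at both endpoints.\<close>
lemma has_integral_weighted_deriv_poly:
  assumes "b > -1" and "a > -1"
  shows "((\<lambda>t. t powr b * (1 - t) powr a * poly (weighted_deriv_poly (b + 1) (a + 1) Q) t)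
           has_integral 0) {0..1}"
proof -
  let ?\<phi> = "\<lambda>t. t powr (b + 1) * (1 - t) powr (a + 1) * poly Q t"
  have "((\<lambda>t. t powr b * (1 - t) powr a * poly (weighted_deriv_poly (b + 1) (a + 1) Q) t)
          has_integral (?\<phi> 1 - ?\<phi> 0)) {0..1}"
  proof (rule fundamental_theorem_of_calculus_interior)
    show "continuous_on {0..1} ?\<phi>"
      using assms by (intro continuous_intros continuous_on_powr') auto
    show "(?\<phi> has_vector_derivative t powr b * (1 - t) powr a * poly (weighted_deriv_poly (b + 1) (a + 1) Q) t)
        (at t)" if "t \<in> {0<..<1}" for t
      using has_real_derivative_weighted_poly[OF that, of "b + 1" "a + 1" Q]
      by (simp add: has_real_derivative_iff_has_vector_derivative)
  qed simp
  then show ?thesis by simp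
qed

lemma poly_weighted_deriv_poly_mult_X:
  "poly (weighted_deriv_poly b a ([:0, 1:] * Q)) t
     = t * poly (weighted_deriv_poly b a Q) t + t * (1 - t) * poly Q t"
  by (simp add: weighted_deriv_poly_def pderiv_mult pderiv_pCons algebra_simps)

lemma has_integral_first_moment_weighted_deriv_poly:
  assumes "b > -1" and "a > -1"
    and I: "((\<lambda>t. t powr (b + 1) * (1 - t) powr (a + 1) * poly Q t) has_integral I) {0..1}"
  shows "((\<lambda>t. t * (t powr b * (1 - t) powr a * poly (weighted_deriv_poly (b + 1) (a + 1) Q) t))
           has_integral - I) {0..1}"
proof -
  let ?w = "\<lambda>t. t powr b * (1 - t) powr a"
  have "t powr (b + 1) * (1 - t) powr (a + 1) * poly Q t = ?w t * (t * (1 - t) * poly Q t)"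
    if "t \<in> {0..1}" for t
    using that by (simp add: powr_add mult_ac)
  then have I': "((\<lambda>t. ?w t * (t * (1 - t) * poly Q t)) has_integral I) {0..1}"
    using has_integral_cong I by (metis (no_types, lifting))
  have "((\<lambda>t. ?w t * poly (weighted_deriv_poly (b + 1) (a + 1) ([:0, 1:] * Q)) t
          - ?w t * (t * (1 - t) * poly Q t)) has_integral 0 - I) {0..1}"
    by (rule has_integral_diff[OF has_integral_weighted_deriv_poly[OF assms(1,2)] I'])
  moreover have "?w t * poly (weighted_deriv_poly (b + 1) (a + 1) ([:0, 1:] * Q)) t
      - ?w t * (t * (1 - t) * poly Q t)
      = t * (?w t * poly (weighted_deriv_poly (b + 1) (a + 1) Q) t)" for t
    unfolding poly_weighted_deriv_poly_mult_X by (simp add: algebra_simps)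
  ultimately show ?thesis
    by simp
qed

lemma weighted_deriv_poly_twice_moments:
  assumes "b > -1" and "a > -1"
  shows "((\<lambda>t. t powr b * (1 - t) powr a
            * poly (weighted_deriv_poly (b + 1) (a + 1) (weighted_deriv_poly (b + 2) (a + 2) Q)) t)
           has_integral 0) {0..1}"
    and "((\<lambda>t. t * (t powr b * (1 - t) powr a
            * poly (weighted_deriv_poly (b + 1) (a + 1) (weighted_deriv_poly (b + 2) (a + 2) Q)) t))
           has_integral 0) {0..1}"
proof -
  show "((\<lambda>t. t powr b * (1 - t) powr a
            * poly (weighted_deriv_poly (b + 1) (a + 1) (weighted_deriv_poly (b + 2) (a + 2) Q)) t)
           has_integral 0) {0..1}"
    by (rule has_integral_weighted_deriv_poly) fact+
  have "((\<lambda>t. t powr (b + 1) * (1 - t) powr (a + 1)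
            * poly (weighted_deriv_poly (b + 1 + 1) (a + 1 + 1) Q) t) has_integral 0) {0..1}"
    by (rule has_integral_weighted_deriv_poly) (use assms in auto)
  from has_integral_first_moment_weighted_deriv_poly[OF assms, of _ 0] this
  show "((\<lambda>t. t * (t powr b * (1 - t) powr a
            * poly (weighted_deriv_poly (b + 1) (a + 1) (weighted_deriv_poly (b + 2) (a + 2) Q)) t))
           has_integral 0) {0..1}"
    by (simp add: add.assoc)
qed

lemma min_kernel_moments:
  assumes "a > -1" and "b > -1" and "h \<noteq> 0"
  shows "set_integrable lborel {0..1} (min_kernel a b h)"
    and "(min_kernel a b h has_integral 0) {0..1}"
    and "((\<lambda>\<tau>. \<tau> * min_kernel a b h \<tau>) has_integral 1 / h) {0..1}"
proof -
  define K where "K = 1 / h * (Gamma (a + b + 4) / (Gamma (b + 2) * Gamma (a + 2)))"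
  let ?f = "\<lambda>t. t powr b * (1 - t) powr a * poly (weighted_deriv_poly (b + 1) (a + 1) [:-1:]) t"
  have poly_eq: "poly (weighted_deriv_poly (b + 1) (a + 1) [:-1:]) t = (a + b + 2) * t - (b + 1)" for t
    by (simp add: weighted_deriv_poly_def algebra_simps)
  have kernel_eq: "min_kernel a b h = (\<lambda>t. K * ?f t)"
    by (simp add: fun_eq_iff min_kernel_def K_def poly_eq mult_ac)
  have "set_integrable lborel {0..1} (\<lambda>t. t powr b * (1 - t) powr a * (K * poly (weighted_deriv_poly (b + 1) (a + 1) [:-1:]) t))"
    by (rule set_integrable_beta_weighted) (use assms in \<open>auto simp: poly_eq intro!: continuous_intros\<close>)
  then show "set_integrable lborel {0..1} (min_kernel a b h)"
    by (simp add: kernel_eq mult_ac)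
  show "(min_kernel a b h has_integral 0) {0..1}"
    unfolding kernel_eq using has_integral_mult_right[OF has_integral_weighted_deriv_poly[OF assms(2,1)], of K]
    by simp
  have "((\<lambda>t. t powr (b + 2 - 1) * (1 - t) powr (a + 2 - 1)) has_integral Beta (b + 2) (a + 2)) {0..1}"
    by (rule has_integral_Beta_real) (use assms in auto)
  then have "((\<lambda>t. t powr (b + 1) * (1 - t) powr (a + 1) * poly [:-1:] t) has_integral - Beta (b + 2) (a + 2)) {0..1}"
    using has_integral_neg by (simp add: add_ac)
  from has_integral_mult_right[OF has_integral_first_moment_weighted_deriv_poly[OF assms(2,1) this], of K]
  have "((\<lambda>\<tau>. \<tau> * min_kernel a b h \<tau>) has_integral K * Beta (b + 2) (a + 2)) {0..1}"
    by (simp add: kernel_eq mult_ac)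
  moreover have "K * Beta (b + 2) (a + 2) = 1 / h"
  proof -
    have "Gamma (b + 2) \<noteq> 0" "Gamma (a + 2) \<noteq> 0" "Gamma (a + b + 4) \<noteq> 0"
      using assms by (auto intro!: Gamma_real_pos[THEN less_imp_neq, THEN not_sym])
    moreover have "b + 2 + (a + 2) = a + b + 4" by simp
    ultimately show ?thesis by (simp add: K_def Beta_def field_simps)
  qed
  ultimately show "((\<lambda>\<tau>. \<tau> * min_kernel a b h \<tau>) has_integral 1 / h) {0..1}"
    by simp
qed

lemma aff_kernel_moments:
  assumes "\<mu> > -1" and "\<kappa> > -1" and "h \<noteq> 0"
  shows "set_integrable lborel {0..1} (aff_kernel \<mu> \<kappa> h \<xi>)"
    and "(aff_kernel \<mu> \<kappa> h \<xi> has_integral 0) {0..1}"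
    and "((\<lambda>\<tau>. \<tau> * aff_kernel \<mu> \<kappa> h \<xi> \<tau>) has_integral 1 / h) {0..1}"
proof -
  define l where "l = (\<kappa> + 3) - (\<mu> + \<kappa> + 5) * \<xi>"
  have kernel_eq: "aff_kernel \<mu> \<kappa> h \<xi>
      = (\<lambda>\<tau>. l * min_kernel (\<mu> + 1) \<kappa> h \<tau> + (1 - l) * min_kernel \<mu> (\<kappa> + 1) h \<tau>)"
    by (simp add: fun_eq_iff aff_kernel_def l_def Let_def)
  have "\<mu> + 1 > -1" and "\<kappa> + 1 > -1" using assms by auto
  note M1 = min_kernel_moments[OF \<open>\<mu> + 1 > -1\<close> assms(2,3)]
    and M2 = min_kernel_moments[OF assms(1) \<open>\<kappa> + 1 > -1\<close> assms(3)]
  show "set_integrable lborel {0..1} (aff_kernel \<mu> \<kappa> h \<xi>)"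
    unfolding kernel_eq using M1(1) M2(1)
    by (intro set_integral_add(1) set_integrable_mult_right)
  show "(aff_kernel \<mu> \<kappa> h \<xi> has_integral 0) {0..1}"
    unfolding kernel_eq
    using has_integral_add[OF has_integral_mult_right[OF M1(2)] has_integral_mult_right[OF M2(2)]]
    by simp
  have "((\<lambda>\<tau>. \<tau> * aff_kernel \<mu> \<kappa> h \<xi> \<tau>) has_integral l * (1 / h) + (1 - l) * (1 / h)) {0..1}"
    using has_integral_add[OF has_integral_mult_right[OF M1(3), of l] has_integral_mult_right[OF M2(3), of "1 - l"]]
    unfolding kernel_eq by (simp add: algebra_simps)
  then show "((\<lambda>\<tau>. \<tau> * aff_kernel \<mu> \<kappa> h \<xi> \<tau>) has_integral 1 / h) {0..1}"
    by (simp add: add_divide_distrib[symmetric])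
qed

fun iter_weighted_deriv_poly :: "real \<Rightarrow> real \<Rightarrow> real poly \<Rightarrow> nat \<Rightarrow> real poly" where
  "iter_weighted_deriv_poly b a Q 0 = Q"
| "iter_weighted_deriv_poly b a Q (Suc k)
     = weighted_deriv_poly (b - real k) (a - real k) (iter_weighted_deriv_poly b a Q k)"

lemma higher_deriv_weighted_poly:
  assumes f: "\<And>s. s \<in> {0<..<1} \<Longrightarrow> f s = s powr b * (1 - s) powr a * poly Q s"
    and "s \<in> {0<..<1}"
  shows "(deriv ^^ k) f s
           = s powr (b - real k) * (1 - s) powr (a - real k) * poly (iter_weighted_deriv_poly b a Q k) s"
  using \<open>s \<in> {0<..<1}\<close>
proof (induction k arbitrary: s)
  case 0
  then show ?case using f by simp
next
  case (Suc k)
  have "((deriv ^^ k) f has_real_derivative s powr (b - real k - 1) * (1 - s) powr (a - real k - 1)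
          * poly (iter_weighted_deriv_poly b a Q (Suc k)) s) (at s)"
    by (rule has_field_derivative_transform_within_open[OF _ _ Suc.prems])
       (use has_real_derivative_weighted_poly[OF Suc.prems] Suc.IH in auto)
  then show ?case
    by (simp add: DERIV_imp_deriv algebra_simps)
qed

definition jacobi_poly :: "nat \<Rightarrow> real \<Rightarrow> real \<Rightarrow> real poly" where
  "jacobi_poly k a b = (\<Sum>s=0..k. smult (((real k + a) gchoose s) * ((real k + b) gchoose (k - s)))
                          ([:-1, 1:] ^ (k - s) * [:0, 1:] ^ s))"

lemma poly_jacobi_poly: "poly (jacobi_poly k a b) t = jacP k a b t"
  by (simp add: jacobi_poly_def jacP_def poly_sum mult_ac)

lemma set_integrable_spike_interior:
  fixes p q :: "real \<Rightarrow> real"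
  assumes "a < b" and q: "set_integrable lborel {a..b} q" and eq: "\<And>x. x \<in> {a<..<b} \<Longrightarrow> p x = q x"
  shows "set_integrable lborel {a..b} p"
proof -
  have "(\<lambda>x. indicator {a..b} x * p x) = (\<lambda>x. indicator {a<..<b} x *\<^sub>R (indicator {a..b} x * q x)
          + indicator {a} x *\<^sub>R p a + indicator {b} x *\<^sub>R p b)"
    using \<open>a < b\<close> by (auto simp: fun_eq_iff indicator_def eq)
  moreover have "integrable lborel (\<lambda>x. indicator {a<..<b} x *\<^sub>R (indicator {a..b} x * q x)
          + indicator {a} x *\<^sub>R p a + indicator {b} x *\<^sub>R p b)"
    using q unfolding set_integrable_def
    by (intro Bochner_Integration.integrable_add integrable_mult_indicator integrable_indicator) auto
  ultimately show ?thesis by (simp add: set_integrable_def)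
qed

lemma jacobi_kernel_moments:
  assumes "\<mu> > -1" and "\<kappa> > -1" and "2 \<le> n"
  shows "set_integrable lborel {0..1} (jacobi_kernel \<mu> \<kappa> h n N \<xi>)"
    and "(jacobi_kernel \<mu> \<kappa> h n N \<xi> has_integral 0) {0..1}"
    and "((\<lambda>\<tau>. \<tau> * jacobi_kernel \<mu> \<kappa> h n N \<xi> \<tau>) has_integral 0) {0..1}"
proof -
  obtain m where n: "n = Suc (Suc m)"
    using assms(3) by (metis add_2_eq_Suc le_Suc_ex)
  define a where "a = \<mu> + real n"
  define b where "b = \<kappa> + real n"
  have exponents: "b - real (Suc (Suc m)) = \<kappa>" "a - real (Suc (Suc m)) = \<mu>"
    "b - real (Suc m) = \<kappa> + 1" "a - real (Suc m) = \<mu> + 1" "b - real m = \<kappa> + 2" "a - real m = \<mu> + 2"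
    by (simp_all add: a_def b_def n)
  \<comment> \<open>the values of the coefficients play no role\<close>
  define c where "c i = (-1) ^ n / h ^ n * (jacP i a b \<xi> / jac_norm2 i a b)" for i
  define J where "J i s = s powr \<kappa> * (1 - s) powr \<mu>
      * poly (weighted_deriv_poly (\<kappa> + 1) (\<mu> + 1) (weighted_deriv_poly (\<kappa> + 2) (\<mu> + 2)
          (iter_weighted_deriv_poly b a (jacobi_poly i a b) m))) s" for i s
  have kernel_eq: "jacobi_kernel \<mu> \<kappa> h n N \<xi> s = (\<Sum>i=0..N - n. c i * J i s)" if "s \<in> {0<..<1}" for s
  proof -
    have "(deriv ^^ n) (\<lambda>s. jw a b s * jacP i a b s) s = J i s" for i
      using higher_deriv_weighted_poly[of "\<lambda>s. jw a b s * jacP i a b s" b a "jacobi_poly i a b" s n] that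
      unfolding n iter_weighted_deriv_poly.simps exponents by (simp add: jw_def poly_jacobi_poly J_def)
    then show ?thesis
      by (simp add: jacobi_kernel_def c_def a_def b_def sum_distrib_left mult_ac)
  qed
  have J_int: "set_integrable lborel {0..1} (J i)" for i
    unfolding J_def by (rule set_integrable_beta_weighted[OF assms(2,1)]) (intro continuous_intros)
  have J_moments: "(J i has_integral 0) {0..1}" "((\<lambda>s. s * J i s) has_integral 0) {0..1}" for i
    unfolding J_def using weighted_deriv_poly_twice_moments[OF assms(2,1)] by auto
  have "integrable lborel (\<lambda>s. \<Sum>i=0..N - n. c i * (indicator {0..1} s * J i s))"
    using J_int by (intro Bochner_Integration.integrable_sum integrable_mult_right) (simp add: set_integrable_def)
  then have "set_integrable lborel {0..1} (\<lambda>s. \<Sum>i=0..N - n. c i * J i s)"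
    by (simp add: set_integrable_def sum_distrib_left mult.left_commute)
  then show "set_integrable lborel {0..1} (jacobi_kernel \<mu> \<kappa> h n N \<xi>)"
    by (rule set_integrable_spike_interior[OF zero_less_one _ kernel_eq])
  have "((\<lambda>s. \<Sum>i=0..N - n. c i * J i s) has_integral (\<Sum>i=0..N - n. c i * 0)) {0..1}"
    by (intro has_integral_sum has_integral_mult_right J_moments) auto
  then have "((\<lambda>s. \<Sum>i=0..N - n. c i * J i s) has_integral 0) {0..1}"
    by simp
  then show "(jacobi_kernel \<mu> \<kappa> h n N \<xi> has_integral 0) {0..1}"
    by (rule has_integral_spike_interior[of _ _ "0::real" 1, unfolded box_real])
       (simp_all add: kernel_eq)
  have "((\<lambda>s. \<Sum>i=0..N - n. c i * (s * J i s)) has_integral (\<Sum>i=0..N - n. c i * 0)) {0..1}"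
    by (intro has_integral_sum has_integral_mult_right J_moments) auto
  then have "((\<lambda>s. \<Sum>i=0..N - n. c i * (s * J i s)) has_integral 0) {0..1}"
    by simp
  then show "((\<lambda>\<tau>. \<tau> * jacobi_kernel \<mu> \<kappa> h n N \<xi> \<tau>) has_integral 0) {0..1}"
    by (rule has_integral_spike_interior[of _ _ "0::real" 1, unfolded box_real])
       (simp_all add: kernel_eq sum_distrib_left mult_ac)
qed

theorem proposition4:
  fixes I :: "real set" and \<beta> T t0 \<kappa> \<mu> \<nu> :: real
    and M :: "'a measure" and W :: "real \<Rightarrow> 'a \<Rightarrow> real"
  assumes "open I" and "is_interval I" and "I \<subseteq> {0..}"
    and "\<beta> \<in> {-1, 1}" and "t0 \<in> I" and "T > 0" and "t0 + \<beta> * T \<in> I"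
    and "\<kappa> > -1" and "\<mu> > -1"
    and "poisson_process M \<nu> W"
  shows "(\<forall>n N \<xi>. 2 \<le> n \<and> n \<le> N \<and> \<xi> \<in> {0..1} \<longrightarrow>
            (\<integral>\<omega>. noise_err (jacobi_kernel \<mu> \<kappa> (\<beta> * T) n N \<xi>) W (\<beta> * T) t0 \<omega> \<partial>M) = 0)
       \<and> (\<integral>\<omega>. noise_err (min_kernel \<mu> \<kappa> (\<beta> * T)) W (\<beta> * T) t0 \<omega> \<partial>M) = \<nu>
       \<and> (\<forall>\<xi>\<in>{0..1}.
            (\<integral>\<omega>. noise_err (aff_kernel \<mu> \<kappa> (\<beta> * T) \<xi>) W (\<beta> * T) t0 \<omega> \<partial>M) = \<nu>)"
proof -
  define h where "h = \<beta> * T"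
  have t0: "0 \<le> t0" "0 \<le> t0 + h" and "h \<noteq> 0"
    using assms(3-7) by (auto simp: h_def)
  note noise = poisson_noise_err_expectation[OF \<open>poisson_process M \<nu> W\<close> t0]
  have "(\<integral>\<omega>. noise_err (jacobi_kernel \<mu> \<kappa> h n N \<xi>) W h t0 \<omega> \<partial>M) = 0" if "2 \<le> n" for n N \<xi>
    using noise[OF jacobi_kernel_moments[OF \<open>\<mu> > -1\<close> \<open>\<kappa> > -1\<close> that]] by simp
  moreover have "(\<integral>\<omega>. noise_err (min_kernel \<mu> \<kappa> h) W h t0 \<omega> \<partial>M) = \<nu>"
    using noise[OF min_kernel_moments[OF \<open>\<mu> > -1\<close> \<open>\<kappa> > -1\<close> \<open>h \<noteq> 0\<close>]] \<open>h \<noteq> 0\<close> by simp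
  moreover have "(\<integral>\<omega>. noise_err (aff_kernel \<mu> \<kappa> h \<xi>) W h t0 \<omega> \<partial>M) = \<nu>" for \<xi>
    using noise[OF aff_kernel_moments[OF \<open>\<mu> > -1\<close> \<open>\<kappa> > -1\<close> \<open>h \<noteq> 0\<close>]] \<open>h \<noteq> 0\<close> by simp
  ultimately show ?thesis
    unfolding h_def by blast
qed

end
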